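(* Let $Y$ be a statistically compact topological space such that the diagonal $\Delta Y$ is statistically closed in $Y\times Y$, and let $X$ be an open subspace of $Y$ which is statistical sequential, not statistically compact, and such that $Y\setminus X$ consists of exactly one point. Let $f:Y\to X^s$ be the unique bijection which is the identity on $X$. Then $f$ is a statistical homeomorphism.
   Context: For $A\subseteq\mathbb{N}$ let $d_n(A)=|A\cap\{1,\dots,n\}|/n$, $\overline{d}(A)=\limsup_n d_n(A)$, $\underline{d}(A)=\liminf_n d_n(A)$, and $d(A)$ their common value when equal. A sequence in $X$ is a map from an infinite subset $M\subseteq\mathbb{N}$ into $X$, written $(x_n)_{n\in M}$; a subsequence is $(x_n)_{n\in N}$ with $N\subseteq M$ infinite. It is nonthin if $\overline{d}(M)>0$. A nonthin sequence $(x_n)_{n\in M}$ is statistically convergent to $a\in X$ if for every open $U\ni a$, $d(\{n\in M:x_n\notin U\})=0$. The statistical closure $\overline{F}^{ST}$ of $F\subseteq X$ is the set of $x\in X$ such that some nonthin sequence in $F$ is statistically convergent to $x$; $F$ is statistically closed if $\overline{F}^{ST}=F$. For a space $(X,\tau)$, $\tau_{ST}=\{F\subseteq X: X\setminus F$ is statistically closed$\}$, and $X$ is statistical sequential if $\tau=\tau_{ST}$. A topological space is statistically compact if every nonthin sequence in it has a nonthin subsequence that is statistically convergent to some point of the space; a subset is statistically compact if it is so in the subspace topology. For $(X,\tau)$ not statistically compact, the one point statistical compactification is $X^s=X\cup\{\infty^X\}$ ($\infty^X\notin X$) with topology $\tau^X_s=\tau\cup\{X^s\setminus C: C$ closed and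 statistically compact subset of $X\}$. A function is statistically continuous if it maps every nonthin sequence statistically converging to $x$ to a sequence (same index set) statistically converging to the image of $x$; a bijection $f$ is a statistical homeomorphism if $f$ and $f^{-1}$ are both statistically continuous. *)

theory Defs
  imports "HOL-Analysis.Analysis" "HOL-Library.Liminf_Limsup"
begin

definition dens_n :: "nat set \<Rightarrow> nat \<Rightarrow> real" where
  "dens_n A n = real (card (A \<inter> {1..n})) / real n"

definition upper_density :: "nat set \<Rightarrow> ereal" where
  "upper_density A = limsup (\<lambda>n. ereal (dens_n A n))"

definition density_zero :: "nat set \<Rightarrow> bool" where
  "density_zero A \<longleftrightarrow> (\<lambda>n. dens_n A n) \<longlonglongrightarrow> 0"

definition nonthin :: "nat set \<Rightarrow> bool" where
  "nonthin M \<longleftrightarrow> infinite M \<and> upper_density M > 0"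

text \<open>A sequence is a pair (M, x): index set M and values x n for n \<in> M.
  Statistical convergence of the nonthin sequence (x_n)_{n\<in>M} in T to a.\<close>
definition stat_conv :: "'a topology \<Rightarrow> nat set \<Rightarrow> (nat \<Rightarrow> 'a) \<Rightarrow> 'a \<Rightarrow> bool" where
  "stat_conv T M x a \<longleftrightarrow>
     nonthin M \<and> x ` M \<subseteq> topspace T \<and> a \<in> topspace T \<and>
     (\<forall>U. openin T U \<and> a \<in> U \<longrightarrow> density_zero {n \<in> M. x n \<notin> U})"

definition stat_closure :: "'a topology \<Rightarrow> 'a set \<Rightarrow> 'a set" where
  "stat_closure T F = {a \<in> topspace T. \<exists>M x. x ` M \<subseteq> F \<and> stat_conv T M x a}"

definition stat_closed :: "'a topology \<Rightarrow> 'a set \<Rightarrow> bool" where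
  "stat_closed T F \<longleftrightarrow> F \<subseteq> topspace T \<and> stat_closure T F = F"

definition stat_sequential :: "'a topology \<Rightarrow> bool" where
  "stat_sequential T \<longleftrightarrow>
     (\<forall>U. U \<subseteq> topspace T \<longrightarrow> (openin T U \<longleftrightarrow> stat_closed T (topspace T - U)))"

definition stat_compact_space :: "'a topology \<Rightarrow> bool" where
  "stat_compact_space T \<longleftrightarrow>
     (\<forall>M x. nonthin M \<and> x ` M \<subseteq> topspace T \<longrightarrow>
        (\<exists>N a. N \<subseteq> M \<and> stat_conv T N x a))"

definition stat_compact_in :: "'a topology \<Rightarrow> 'a set \<Rightarrow> bool" where
  "stat_compact_in T C \<longleftrightarrow> C \<subseteq> topspace T \<and> stat_compact_space (subtopology T C)"

text \<open>One point statistical compactification X^s of a space X, realised on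
  the type 'a option: points of X are Some x, the point at infinity is None.\<close>
definition stat_compactification :: "'a topology \<Rightarrow> 'a option topology" where
  "stat_compactification X = topology (\<lambda>V.
     (\<exists>U. openin X U \<and> V = Some ` U) \<or>
     (\<exists>C. closedin X C \<and> stat_compact_in X C \<and> V = insert None (Some ` (topspace X - C))))"

definition stat_continuous :: "'a topology \<Rightarrow> 'b topology \<Rightarrow> ('a \<Rightarrow> 'b) \<Rightarrow> bool" where
  "stat_continuous S T f \<longleftrightarrow>
     (\<forall>x \<in> topspace S. f x \<in> topspace T) \<and>
     (\<forall>M s a. stat_conv S M s a \<longrightarrow> stat_conv T M (f \<circ> s) (f a))"

definition stat_homeomorphism :: "'a topology \<Rightarrow> 'b topology \<Rightarrow> ('a \<Rightarrow> 'b) \<Rightarrow> bool" where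
  "stat_homeomorphism S T f \<longleftrightarrow>
     bij_betw f (topspace S) (topspace T) \<and> stat_continuous S T f \<and>
     stat_continuous T S (inv_into (topspace S) f)"

end

theory Submission
  imports Defs
begin

text \<open>Preimages of open sets of X are open in Y since X
  is open in Y. A sequence statistically converging to a leaves a neighbourhood X^s - C of the
  image of a (C statistically compact, a \<notin> C) only at indices where it lies in C; were these
  nonthin, they would carry a subsequence statistically converging to a point of C, a second
  limit of the sequence, whereas the statistically closed diagonal makes statistical limits
  unique. For the inverse, the complement of a neighbourhood of p is closed in the statistically
  compact Y, hence statistically compact, so its complement in X^s is a neighbourhood of the
  point at infinity.\<close>

lemma dens_n_nonneg: "0 \<le> dens_n A n"
  by (simp add: dens_n_def)

lemma dens_n_mono: "A \<subseteq> B \<Longrightarrow> dens_n A n \<le> dens_n B n"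
  unfolding dens_n_def by (auto intro!: divide_right_mono card_mono)

lemma dens_n_Un_le: "dens_n (A \<union> B) n \<le> dens_n A n + dens_n B n"
proof -
  have "card ((A \<union> B) \<inter> {1..n}) \<le> card (A \<inter> {1..n}) + card (B \<inter> {1..n})"
    by (metis Int_Un_distrib2 card_Un_le)
  then show ?thesis
    unfolding dens_n_def add_divide_distrib[symmetric] by (intro divide_right_mono) auto
qed

lemma density_zero_subset: "A \<subseteq> B \<Longrightarrow> density_zero B \<Longrightarrow> density_zero A"
  unfolding density_zero_def
  by (rule tendsto_sandwich[of "\<lambda>_. 0" _ _ "\<lambda>n. dens_n B n"])
     (auto simp: dens_n_nonneg dens_n_mono)

lemma density_zero_Un: "density_zero A \<Longrightarrow> density_zero B \<Longrightarrow> density_zero (A \<union> B)"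
  unfolding density_zero_def
  by (rule tendsto_sandwich[of "\<lambda>_. 0" _ _ "\<lambda>n. dens_n A n + dens_n B n"])
     (auto simp: dens_n_nonneg dens_n_Un_le intro: tendsto_add_zero)

lemma density_zero_finite: "finite A \<Longrightarrow> density_zero A"
  unfolding density_zero_def
proof (rule tendsto_sandwich[of "\<lambda>_. 0" _ _ "\<lambda>n. real (card A) / real n"])
  assume "finite A"
  then show "\<forall>\<^sub>F n in sequentially. dens_n A n \<le> real (card A) / real n"
    unfolding dens_n_def by (intro always_eventually allI divide_right_mono) (auto intro!: card_mono)
qed (auto simp: dens_n_nonneg lim_const_over_n)

lemma nonthin_iff_not_density_zero: "nonthin A \<longleftrightarrow> \<not> density_zero A"
proof
  assume "nonthin A"
  show "\<not> density_zero A"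
  proof
    assume "density_zero A"
    then have "(\<lambda>n. ereal (dens_n A n)) \<longlonglongrightarrow> 0"
      unfolding density_zero_def zero_ereal_def by simp
    then have "upper_density A = 0"
      unfolding upper_density_def by (rule lim_imp_Limsup[OF trivial_limit_sequentially])
    with \<open>nonthin A\<close> show False by (simp add: nonthin_def)
  qed
next
  assume not_zero: "\<not> density_zero A"
  have "upper_density A > 0"
  proof (rule ccontr)
    let ?d = "\<lambda>n. ereal (dens_n A n)"
    assume "\<not> upper_density A > 0"
    then have "limsup ?d \<le> 0" by (simp add: upper_density_def)
    moreover have "0 \<le> liminf ?d"
      by (rule Liminf_bounded) (simp add: dens_n_nonneg)
    moreover have "liminf ?d \<le> limsup ?d"
      by (rule Liminf_le_Limsup) simp
    ultimately have "liminf ?d = ereal 0" "limsup ?d = ereal 0"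
      by (auto simp: zero_ereal_def[symmetric])
    then have "?d \<longlonglongrightarrow> ereal 0"
      by (intro Liminf_eq_Limsup) auto
    with not_zero show False by (simp add: density_zero_def)
  qed
  with not_zero density_zero_finite show "nonthin A"
    by (auto simp: nonthin_def)
qed

lemma stat_convD:
  assumes "stat_conv T M x a"
  shows "nonthin M" "x ` M \<subseteq> topspace T" "a \<in> topspace T"
    "\<And>U. openin T U \<Longrightarrow> a \<in> U \<Longrightarrow> density_zero {n \<in> M. x n \<notin> U}"
  using assms unfolding stat_conv_def by blast+

lemma stat_convI:
  assumes "nonthin M" "x ` M \<subseteq> topspace T" "a \<in> topspace T"
    "\<And>U. openin T U \<Longrightarrow> a \<in> U \<Longrightarrow> density_zero {n \<in> M. x n \<notin> U}"
  shows "stat_conv T M x a"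
  using assms unfolding stat_conv_def by blast

lemma stat_conv_subtopology_iff:
  "stat_conv (subtopology S C) N x a \<longleftrightarrow> stat_conv S N x a \<and> x ` N \<subseteq> C \<and> a \<in> C"
proof (intro iffI conjI; (elim conjE)?)
  assume sub: "stat_conv (subtopology S C) N x a"
  then show xC: "x ` N \<subseteq> C" and aC: "a \<in> C"
    using stat_convD(2,3)[OF sub] by auto
  show "stat_conv S N x a"
  proof (rule stat_convI)
    fix U assume "openin S U" "a \<in> U"
    then have "density_zero {n \<in> N. x n \<notin> U \<inter> C}"
      using sub aC by (intro stat_convD(4)[OF sub]) (auto simp: openin_subtopology)
    moreover have "{n \<in> N. x n \<notin> U \<inter> C} = {n \<in> N. x n \<notin> U}"
      using xC by auto
    ultimately show "density_zero {n \<in> N. x n \<notin> U}" by simp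
  qed (use stat_convD[OF sub] in auto)
next
  assume conv: "stat_conv S N x a" and xC: "x ` N \<subseteq> C" and aC: "a \<in> C"
  show "stat_conv (subtopology S C) N x a"
  proof (rule stat_convI)
    fix V assume V: "openin (subtopology S C) V" "a \<in> V"
    then obtain U where U: "openin S U" "V = U \<inter> C"
      by (auto simp: openin_subtopology)
    have "{n \<in> N. x n \<notin> V} = {n \<in> N. x n \<notin> U}"
      using xC U(2) by auto
    then show "density_zero {n \<in> N. x n \<notin> V}"
      using stat_convD(4)[OF conv U(1)] U(2) V(2) by simp
  qed (use stat_convD[OF conv] xC aC in auto)
qed

lemma stat_conv_subset:
  assumes "stat_conv S M x a" "N \<subseteq> M" "nonthin N"
  shows "stat_conv S N x a"
  using assms unfolding stat_conv_def
  by (auto intro: density_zero_subset[of _ "{n \<in> M. x n \<notin> _}"])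

lemma stat_conv_closedin:
  assumes "closedin T C" "stat_conv T N x a" "x ` N \<subseteq> C"
  shows "a \<in> C"
proof (rule ccontr)
  assume "a \<notin> C"
  then have "density_zero {n \<in> N. x n \<notin> topspace T - C}"
    using assms(1) stat_convD(3)[OF assms(2)] by (intro stat_convD(4)[OF assms(2)]) auto
  moreover have "{n \<in> N. x n \<notin> topspace T - C} = N"
    using assms(3) by auto
  ultimately show False
    using stat_convD(1)[OF assms(2)] nonthin_iff_not_density_zero by simp
qed

lemma stat_conv_Pair:
  assumes "stat_conv S N x a" "stat_conv T N y b"
  shows "stat_conv (prod_topology S T) N (\<lambda>n. (x n, y n)) (a, b)"
proof (rule stat_convI)
  fix W assume "openin (prod_topology S T) W" "(a, b) \<in> W"
  then obtain U V where UV: "openin S U" "openin T V" "a \<in> U" "b \<in> V" "U \<times> V \<subseteq> W"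
    using openin_prod_topology_alt[of S T W] by blast
  have "density_zero ({n \<in> N. x n \<notin> U} \<union> {n \<in> N. y n \<notin> V})"
    using UV stat_convD(4)[OF assms(1)] stat_convD(4)[OF assms(2)] by (intro density_zero_Un)
  then show "density_zero {n \<in> N. (x n, y n) \<notin> W}"
    by (rule density_zero_subset[rotated]) (use UV in auto)
qed (use stat_convD[OF assms(1)] stat_convD[OF assms(2)] in auto)

lemma stat_conv_unique:
  assumes "stat_closed (prod_topology Y Y) {(y, y) | y. y \<in> topspace Y}"
    and "stat_conv Y M s a" "stat_conv Y M s b"
  shows "a = b"
proof -
  have "(\<lambda>n. (s n, s n)) ` M \<subseteq> {(y, y) | y. y \<in> topspace Y}"
    using stat_convD(2)[OF assms(2)] by auto
  moreover have pair: "stat_conv (prod_topology Y Y) M (\<lambda>n. (s n, s n)) (a, b)"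
    using assms(2,3) by (rule stat_conv_Pair)
  ultimately have "(a, b) \<in> stat_closure (prod_topology Y Y) {(y, y) | y. y \<in> topspace Y}"
    unfolding stat_closure_def using stat_convD(3)[OF pair] by blast
  with assms(1) have "(a, b) \<in> {(y, y) | y. y \<in> topspace Y}"
    by (simp add: stat_closed_def)
  then show ?thesis by simp
qed

lemma stat_compact_in_empty: "stat_compact_in X {}"
  unfolding stat_compact_in_def stat_compact_space_def nonthin_def by auto

lemma stat_compact_in_closedin:
  assumes "closedin T C" "stat_compact_space T"
  shows "stat_compact_in T C"
  unfolding stat_compact_in_def stat_compact_space_def
proof (intro conjI allI impI)
  show "C \<subseteq> topspace T" using assms(1) closedin_subset by blast
  fix M x assume "nonthin M \<and> x ` M \<subseteq> topspace (subtopology T C)"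
  then have M: "nonthin M" and xC: "x ` M \<subseteq> C" and "x ` M \<subseteq> topspace T"
    by auto
  then obtain N a where N: "N \<subseteq> M" "stat_conv T N x a"
    using assms(2) unfolding stat_compact_space_def by meson
  have "x ` N \<subseteq> C" using xC N(1) by blast
  with N stat_conv_closedin[OF assms(1) N(2)]
  show "\<exists>N a. N \<subseteq> M \<and> stat_conv (subtopology T C) N x a"
    by (auto simp: stat_conv_subtopology_iff)
qed

lemma stat_compact_in_closed_subset:
  assumes "stat_compact_in T C0" "closedin T C" "C \<subseteq> C0"
  shows "stat_compact_in T C"
proof -
  have "closedin (subtopology T C0) C"
    using assms(2,3) by (rule closedin_subset_topspace)
  then have "stat_compact_space (subtopology (subtopology T C0) C)"
    using assms(1) stat_compact_in_closedin unfolding stat_compact_in_def by blast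
  moreover have "subtopology (subtopology T C0) C = subtopology T C"
    using assms(3) by (simp add: subtopology_subtopology Int_absorb1)
  ultimately show ?thesis
    using closedin_subset[OF assms(2)] unfolding stat_compact_in_def by simp
qed

lemma stat_compact_in_Un:
  assumes "stat_compact_in T C1" "stat_compact_in T C2"
  shows "stat_compact_in T (C1 \<union> C2)"
  unfolding stat_compact_in_def stat_compact_space_def
proof (intro conjI allI impI)
  show "C1 \<union> C2 \<subseteq> topspace T" using assms by (auto simp: stat_compact_in_def)
  fix M x assume Mx: "nonthin M \<and> x ` M \<subseteq> topspace (subtopology T (C1 \<union> C2))"
  have "M = {n \<in> M. x n \<in> C1} \<union> {n \<in> M. x n \<in> C2}"
    using Mx by auto
  moreover have "\<not> density_zero M"
    using Mx nonthin_iff_not_density_zero by blast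
  ultimately obtain C where C: "C = C1 \<or> C = C2" and nonthin: "nonthin {n \<in> M. x n \<in> C}"
    unfolding nonthin_iff_not_density_zero by (metis density_zero_Un)
  then have "stat_compact_in T C" using assms by blast
  moreover have "x ` {n \<in> M. x n \<in> C} \<subseteq> topspace (subtopology T C)"
    using Mx by auto
  ultimately obtain N a where "N \<subseteq> {n \<in> M. x n \<in> C}" "stat_conv (subtopology T C) N x a"
    using nonthin unfolding stat_compact_in_def stat_compact_space_def by blast
  with C show "\<exists>N a. N \<subseteq> M \<and> stat_conv (subtopology T (C1 \<union> C2)) N x a"
    by (auto simp: stat_conv_subtopology_iff)
qed

definition stat_compactification_open :: "'a topology \<Rightarrow> 'a option set \<Rightarrow> bool" where
  "stat_compactification_open X V \<longleftrightarrow> (\<exists>U. openin X U \<and> V = Some ` U) \<or>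
     (\<exists>C. closedin X C \<and> stat_compact_in X C \<and> V = insert None (Some ` (topspace X - C)))"

text \<open>Describing open sets by their traces on X makes intersections and unions easy.\<close>
lemma stat_compactification_open_iff:
  "stat_compactification_open X V \<longleftrightarrow>
     V \<subseteq> insert None (Some ` topspace X) \<and> openin X (Some -` V) \<and>
     (None \<in> V \<longrightarrow> stat_compact_in X (topspace X - Some -` V))"
  (is "?lhs \<longleftrightarrow> ?rhs")
proof
  assume ?lhs
  then show ?rhs
    unfolding stat_compactification_open_def
  proof (elim disjE exE conjE)
    fix U assume "openin X U" "V = Some ` U"
    then show ?rhs using openin_subset by (auto simp: inj_vimage_image_eq)
  next
    fix C assume C: "closedin X C" "stat_compact_in X C"
      "V = insert None (Some ` (topspace X - C))"
    then have "Some -` V = topspace X - C" by auto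
    with C show ?rhs using closedin_subset[OF C(1)]
      by (auto simp: openin_diff Diff_Diff_Int Int_absorb1)
  qed
next
  assume ?rhs
  then have V: "V \<subseteq> insert None (Some ` topspace X)" and open_trace: "openin X (Some -` V)"
    and None: "None \<in> V \<Longrightarrow> stat_compact_in X (topspace X - Some -` V)"
    by auto
  have trace: "Some -` V \<subseteq> topspace X" using openin_subset[OF open_trace] .
  show ?lhs
  proof (cases "None \<in> V")
    case False
    with V have "V = Some ` (Some -` V)" by (auto simp: subset_iff)
    with open_trace show ?thesis
      unfolding stat_compactification_open_def by blast
  next
    case True
    have "closedin X (topspace X - Some -` V)" using open_trace by blast
    moreover have "V = insert None (Some ` (topspace X - (topspace X - Some -` V)))"
      using True V trace by (auto simp: subset_iff Diff_Diff_Int Int_absorb2)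
    ultimately show ?thesis
      using None True unfolding stat_compactification_open_def by blast
  qed
qed

lemma stat_compactification_open_Int:
  assumes "stat_compactification_open X S" "stat_compactification_open X T"
  shows "stat_compactification_open X (S \<inter> T)"
proof -
  have "Some -` (S \<inter> T) = Some -` S \<inter> Some -` T" by auto
  moreover have "topspace X - Some -` (S \<inter> T) =
      (topspace X - Some -` S) \<union> (topspace X - Some -` T)" by auto
  moreover have "None \<in> S \<inter> T \<Longrightarrow>
      stat_compact_in X ((topspace X - Some -` S) \<union> (topspace X - Some -` T))"
    using assms by (intro stat_compact_in_Un) (auto simp: stat_compactification_open_iff)
  ultimately show ?thesis
    using assms by (auto simp: stat_compactification_open_iff)
qed

lemma stat_compactification_open_Union:
  assumes opens: "\<And>V. V \<in> \<V> \<Longrightarrow> stat_compactification_open X V"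
  shows "stat_compactification_open X (\<Union>\<V>)"
  unfolding stat_compactification_open_iff
proof (intro conjI impI)
  show "\<Union>\<V> \<subseteq> insert None (Some ` topspace X)"
    using opens stat_compactification_open_iff by blast
  have "openin X (Some -` V)" if "V \<in> \<V>" for V
    using opens[OF that] stat_compactification_open_iff by blast
  then have "openin X (\<Union>V\<in>\<V>. Some -` V)" by blast
  moreover have "Some -` \<Union>\<V> = (\<Union>V\<in>\<V>. Some -` V)" by blast
  ultimately show open_trace: "openin X (Some -` \<Union>\<V>)" by simp
  assume "None \<in> \<Union>\<V>"
  then obtain V0 where V0: "V0 \<in> \<V>" "None \<in> V0" by blast
  then have "stat_compact_in X (topspace X - Some -` V0)"
    using opens stat_compactification_open_iff by blast
  moreover have "topspace X - Some -` \<Union>\<V> \<subseteq> topspace X - Some -` V0"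
    using V0(1) by blast
  ultimately show "stat_compact_in X (topspace X - Some -` \<Union>\<V>)"
    using open_trace by (auto intro: stat_compact_in_closed_subset)
qed

lemma istopology_stat_compactification_open: "istopology (stat_compactification_open X)"
  unfolding istopology_def
  by (simp add: stat_compactification_open_Int stat_compactification_open_Union)

lemma openin_stat_compactification:
  "openin (stat_compactification X) = stat_compactification_open X"
  unfolding stat_compactification_def stat_compactification_open_def[abs_def]
  by (rule topology_inverse'[OF istopology_stat_compactification_open[unfolded
        stat_compactification_open_def[abs_def]]])

lemma openin_stat_compactification_Some:
  "openin X U \<Longrightarrow> openin (stat_compactification X) (Some ` U)"
  unfolding openin_stat_compactification stat_compactification_open_def by blast

lemma openin_stat_compactification_None:
  "closedin X C \<Longrightarrow> stat_compact_in X C \<Longrightarrow>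
     openin (stat_compactification X) (insert None (Some ` (topspace X - C)))"
  unfolding openin_stat_compactification stat_compactification_open_def by blast

lemma topspace_stat_compactification:
  "topspace (stat_compactification X) = insert None (Some ` topspace X)"
proof -
  have "stat_compactification_open X (insert None (Some ` topspace X))"
    unfolding stat_compactification_open_def
    by (intro disjI2 exI[of _ "{}"]) (simp add: stat_compact_in_empty)
  moreover have "V \<subseteq> insert None (Some ` topspace X)" if "stat_compactification_open X V" for V
    using that by (simp add: stat_compactification_open_iff)
  ultimately show ?thesis
    unfolding topspace_def openin_stat_compactification by blast
qed

lemma stat_conv_cong:
  assumes "\<And>n. n \<in> M \<Longrightarrow> x n = y n"
  shows "stat_conv T M x a \<longleftrightarrow> stat_conv T M y a"
proof -
  have "x ` M = y ` M" "\<And>U. {n \<in> M. x n \<notin> U} = {n \<in> M. y n \<notin> U}"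
    using assms by auto
  then show ?thesis by (simp add: stat_conv_def)
qed

lemma stat_continuous_cong:
  assumes "\<And>x. x \<in> topspace S \<Longrightarrow> f x = g x"
  shows "stat_continuous S T f \<longleftrightarrow> stat_continuous S T g"
proof -
  have "stat_conv T M (f \<circ> s) (f a) \<longleftrightarrow> stat_conv T M (g \<circ> s) (g a)"
    if "stat_conv S M s a" for M s a
    using stat_convD(2,3)[OF that] assms by (auto intro!: stat_conv_cong)
  then show ?thesis
    unfolding stat_continuous_def using assms by auto
qed

lemma density_zero_visits_stat_compact:
  assumes diagonal: "stat_closed (prod_topology Y Y) {(y, y) | y. y \<in> topspace Y}"
    and conv: "stat_conv Y M s a" and C: "stat_compact_in Y C" "a \<notin> C"
  shows "density_zero {n \<in> M. s n \<in> C}"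
proof (rule ccontr)
  assume "\<not> density_zero {n \<in> M. s n \<in> C}"
  then have "nonthin {n \<in> M. s n \<in> C}"
    by (simp add: nonthin_iff_not_density_zero)
  moreover have "s ` {n \<in> M. s n \<in> C} \<subseteq> topspace (subtopology Y C)"
    using stat_convD(2)[OF conv] by auto
  ultimately obtain N c where N: "N \<subseteq> {n \<in> M. s n \<in> C}" "stat_conv (subtopology Y C) N s c"
    using C(1) unfolding stat_compact_in_def stat_compact_space_def by blast
  then have "stat_conv Y N s c" "c \<in> C"
    by (simp_all add: stat_conv_subtopology_iff)
  moreover have "stat_conv Y N s a"
    using conv _ stat_convD(1)[OF N(2)] by (rule stat_conv_subset) (use N(1) in blast)
  ultimately show False
    using stat_conv_unique[OF diagonal] C(2) by blast
qed

lemma stat_continuous_into_stat_compactification: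
  assumes diagonal: "stat_closed (prod_topology Y Y) {(y, y) | y. y \<in> topspace Y}"
    and X: "openin Y X"
  shows "stat_continuous Y (stat_compactification (subtopology Y X))
           (\<lambda>y. if y \<in> X then Some y else None)"
    (is "stat_continuous Y ?K ?f")
proof -
  have top_K: "topspace ?K = insert None (Some ` X)"
    using openin_subset[OF X] by (simp add: topspace_stat_compactification Int_absorb1)
  have "stat_conv ?K M (?f \<circ> s) (?f a)" if conv: "stat_conv Y M s a" for M s a
  proof (rule stat_convI)
    fix V assume V: "openin ?K V" "?f a \<in> V"
    then consider U where "openin (subtopology Y X) U" "V = Some ` U"
      | C where "closedin (subtopology Y X) C" "stat_compact_in (subtopology Y X) C"
        "V = insert None (Some ` (X - C))"
      using openin_subset[OF X]
      by (auto simp: openin_stat_compactification stat_compactification_open_def Int_absorb1)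
    then show "density_zero {n \<in> M. (?f \<circ> s) n \<notin> V}"
    proof cases
      case (1 U)
      then have "U \<subseteq> X" "openin Y U"
        using X by (simp_all add: openin_open_subtopology)
      moreover have "a \<in> U"
        using V(2) 1(2) by (auto split: if_splits)
      ultimately have "density_zero {n \<in> M. s n \<notin> U}"
        using stat_convD(4)[OF conv] by blast
      moreover have "{n \<in> M. (?f \<circ> s) n \<notin> V} \<subseteq> {n \<in> M. s n \<notin> U}"
        using 1(2) \<open>U \<subseteq> X\<close> by auto
      ultimately show ?thesis by (rule density_zero_subset[rotated])
    next
      case (2 C)
      then have "C \<subseteq> X" using closedin_subset by fastforce
      then have "stat_compact_in Y C"
        using 2(2) openin_subset[OF X]
        by (simp add: stat_compact_in_def subtopology_subtopology Int_absorb1)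
      moreover have "a \<notin> C"
        using V(2) 2(3) \<open>C \<subseteq> X\<close> by (auto split: if_splits)
      ultimately have "density_zero {n \<in> M. s n \<in> C}"
        using density_zero_visits_stat_compact[OF diagonal conv] by blast
      moreover have "{n \<in> M. (?f \<circ> s) n \<notin> V} \<subseteq> {n \<in> M. s n \<in> C}"
        using 2(3) by auto
      ultimately show ?thesis by (rule density_zero_subset[rotated])
    qed
  qed (use stat_convD[OF conv] top_K in auto)
  then show ?thesis
    unfolding stat_continuous_def using top_K by auto
qed

lemma stat_continuous_from_stat_compactification:
  assumes Y: "stat_compact_space Y" and X: "openin Y X" and p: "topspace Y = insert p X"
  shows "stat_continuous (stat_compactification (subtopology Y X)) Y (case_option p id)"
    (is "stat_continuous ?K Y ?g")
proof -
  have top_X: "topspace (subtopology Y X) = X"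
    using openin_subset[OF X] by (simp add: Int_absorb1)
  have top_K: "topspace ?K = insert None (Some ` X)"
    by (simp only: topspace_stat_compactification top_X)
  have "stat_conv Y M (?g \<circ> t) (?g b)" if conv: "stat_conv ?K M t b" for M t b
  proof (rule stat_convI)
    fix U assume U: "openin Y U" "?g b \<in> U"
    have t: "t n \<in> insert None (Some ` X)" if "n \<in> M" for n
      using stat_convD(2)[OF conv] that top_K by auto
    obtain V where V: "openin ?K V" "b \<in> V" "{n \<in> M. (?g \<circ> t) n \<notin> U} \<subseteq> {n \<in> M. t n \<notin> V}"
    proof (cases b)
      case None
      define C where "C = topspace Y - U"
      have "C \<subseteq> X" using U p by (auto simp: C_def None)
      have "closedin Y C" using U(1) by (simp add: C_def closedin_diff)
      then have "closedin (subtopology Y X) C"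
        using \<open>C \<subseteq> X\<close> by (rule closedin_subset_topspace)
      moreover have "stat_compact_in (subtopology Y X) C"
        using stat_compact_in_closedin[OF \<open>closedin Y C\<close> Y] \<open>C \<subseteq> X\<close> openin_subset[OF X]
        by (simp add: stat_compact_in_def subtopology_subtopology Int_absorb1)
      ultimately have "openin ?K (insert None (Some ` (topspace (subtopology Y X) - C)))"
        by (rule openin_stat_compactification_None)
      moreover have "{n \<in> M. (?g \<circ> t) n \<notin> U} \<subseteq>
          {n \<in> M. t n \<notin> insert None (Some ` (topspace (subtopology Y X) - C))}"
        using U None t by (auto simp: C_def top_X split: option.splits)
      ultimately show ?thesis using that None by blast
    next
      case (Some a)
      have "openin (subtopology Y X) (U \<inter> X)"
        using U(1) by (auto simp: openin_subtopology)
      then have "openin ?K (Some ` (U \<inter> X))"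
        by (rule openin_stat_compactification_Some)
      moreover have "b \<in> Some ` (U \<inter> X)"
        using U Some stat_convD(3)[OF conv] top_K by auto
      moreover have "{n \<in> M. (?g \<circ> t) n \<notin> U} \<subseteq> {n \<in> M. t n \<notin> Some ` (U \<inter> X)}"
        by auto
      ultimately show ?thesis using that by blast
    qed
    then show "density_zero {n \<in> M. (?g \<circ> t) n \<notin> U}"
      using stat_convD(4)[OF conv] density_zero_subset by blast
  qed (use stat_convD[OF conv] top_K p in auto)
  then show ?thesis
    unfolding stat_continuous_def using top_K p by auto
qed

theorem mainTheorem20:
  fixes Y :: "'a topology" and X :: "'a set" and p :: 'a
  assumes "stat_compact_space Y"
    and "stat_closed (prod_topology Y Y) {(y, y) | y. y \<in> topspace Y}"
    and "X \<subseteq> topspace Y" and "openin Y X"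
    and "stat_sequential (subtopology Y X)"
    and "\<not> stat_compact_space (subtopology Y X)"
    and "topspace Y - X = {p}"
  shows "stat_homeomorphism Y (stat_compactification (subtopology Y X))
           (\<lambda>y. if y \<in> X then Some y else None)"
    (is "stat_homeomorphism Y ?K ?f")
proof -
  have top_Y: "topspace Y = insert p X" and "p \<notin> X"
    using assms(3,7) by auto
  have top_K: "topspace ?K = insert None (Some ` X)"
    using assms(3) by (simp add: topspace_stat_compactification Int_absorb1)
  have inj: "inj_on ?f (topspace Y)"
    unfolding top_Y using \<open>p \<notin> X\<close> by (auto simp: inj_on_def)
  moreover have "?f ` topspace Y = topspace ?K"
    unfolding top_Y top_K using \<open>p \<notin> X\<close> by auto
  ultimately have bij: "bij_betw ?f (topspace Y) (topspace ?K)"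
    by (simp add: bij_betw_def)
  have "inv_into (topspace Y) ?f v = case_option p id v" if "v \<in> topspace ?K" for v
  proof (rule inv_into_f_eq[OF inj])
    show "case_option p id v \<in> topspace Y" "?f (case_option p id v) = v"
      using that \<open>p \<notin> X\<close> unfolding top_Y top_K by auto
  qed
  then have "stat_continuous ?K Y (inv_into (topspace Y) ?f)"
    using stat_continuous_cong[THEN iffD2]
      stat_continuous_from_stat_compactification[OF assms(1,4) top_Y] by blast
  with bij stat_continuous_into_stat_compactification[OF assms(2,4)] show ?thesis
    unfolding stat_homeomorphism_def by blast
qed

end
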